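(* Let $c\ge 1$ and $d\ge 1$ be integers with $f=d/(2c)\le 1$, and set $\nu=\lfloor\sqrt{2/f}\rfloor$ if $\lfloor\sqrt{2/f}\rfloor\ge 2$, and $\nu=2$ otherwise. Then a single ring on the cycle $C_\nu$ with capacity $c$ on every edge can carry uniform traffic of $d$ units between every pair of its $\nu$ vertices; that is, there exist nonnegative integers $t^0_{jk},t^1_{jk}$ for $1\le j<k\le\nu$ with $t^0_{jk}+t^1_{jk}=d$, where $t^0_{jk}$ and $t^1_{jk}$ are routed on the two arcs of $C_\nu$ between $j$ and $k$, such that for every edge of $C_\nu$ the total traffic on arcs containing that edge is at most $c$.
   Context: $C_\nu$ denotes the cycle graph on vertices $1,\dots,\nu$ in cyclic order (edges $\{l,l+1\}$ for $1\le l<\nu$ and $\{\nu,1\}$; for $\nu=2$ it has two parallel edges, so that the two arcs between vertices $1$ and $2$ are distinct edges). *)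

theory Defs
  imports Complex_Main
begin

text \<open>Edge number l (1 \<le> l \<le> nu) joins l and l+1
  (edge nu joins nu and 1); for nu = 2 edges 1 and 2 are the two parallel edges.
  For vertices j < k, arc 0 is the path j, j+1, ..., k, using edges j, ..., k-1;
  arc 1 is the complementary path k, ..., nu, 1, ..., j using the remaining edges.\<close>

definition cycle_edges :: "nat \<Rightarrow> nat set" where
  "cycle_edges nu = {1..nu}"

definition arc_edges :: "nat \<Rightarrow> nat \<Rightarrow> nat \<Rightarrow> nat \<Rightarrow> nat set" where
  "arc_edges nu s j k = (if s = 0 then {j..<k} else cycle_edges nu - {j..<k})"

definition vertex_pairs :: "nat \<Rightarrow> (nat \<times> nat) set" where
  "vertex_pairs nu = {(j, k). 1 \<le> j \<and> j < k \<and> k \<le> nu}"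

definition edge_load :: "nat \<Rightarrow> (nat \<Rightarrow> nat \<Rightarrow> nat) \<Rightarrow> (nat \<Rightarrow> nat \<Rightarrow> nat) \<Rightarrow> nat \<Rightarrow> nat" where
  "edge_load nu t0 t1 l =
     (\<Sum>(j, k)\<in>vertex_pairs nu.
        (if l \<in> arc_edges nu 0 j k then t0 j k else 0) +
        (if l \<in> arc_edges nu 1 j k then t1 j k else 0))"

definition ring_size :: "nat \<Rightarrow> nat \<Rightarrow> nat" where
  "ring_size c d =
     (let f = real d / (2 * real c);
          m = \<lfloor>sqrt (2 / f)\<rfloor>
      in if m \<ge> 2 then nat m else 2)"

end

theory Submission
  imports Defs
begin

text \<open>Route every demand between j < k entirely on arc 0, the path j, ..., k. Edge l then
  lies on the arcs of exactly l (\<nu> - l) pairs, so its load is d l (\<nu> - l) \<le> d \<nu>^2 / 4, and the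
  choice \<nu> \<le> sqrt (4 c / d) makes this at most c. If the floor is below 2 we have \<nu> = 2 and
  d \<le> 2 c, and splitting the single demand into halves over the two parallel edges works.\<close>

definition feasible_routing ::
    "nat \<Rightarrow> nat \<Rightarrow> nat \<Rightarrow> (nat \<Rightarrow> nat \<Rightarrow> nat) \<Rightarrow> (nat \<Rightarrow> nat \<Rightarrow> nat) \<Rightarrow> bool" where
  "feasible_routing nu c d t0 t1 \<longleftrightarrow>
     (\<forall>(j, k)\<in>vertex_pairs nu. t0 j k + t1 j k = d) \<and>
     (\<forall>l\<in>cycle_edges nu. edge_load nu t0 t1 l \<le> c)"

lemma finite_vertex_pairs: "finite (vertex_pairs n)"
  by (rule finite_subset[of _ "{..n} \<times> {..n}"]) (auto simp: vertex_pairs_def)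

lemma edge_load_arc0_routing:
  assumes "1 \<le> l" "l \<le> n"
  shows "edge_load n (\<lambda>_ _. d) (\<lambda>_ _. 0) l = d * (l * (n - l))"
proof -
  have "edge_load n (\<lambda>_ _. d) (\<lambda>_ _. 0) l
      = (\<Sum>p\<in>vertex_pairs n. if l \<in> {fst p..<snd p} then d else 0)"
    unfolding edge_load_def arc_edges_def by (intro sum.cong) auto
  also have "\<dots> = (\<Sum>p\<in>{p\<in>vertex_pairs n. l \<in> {fst p..<snd p}}. d)"
    by (rule sum.inter_filter[OF finite_vertex_pairs, symmetric])
  also have "{p\<in>vertex_pairs n. l \<in> {fst p..<snd p}} = {1..l} \<times> {l+1..n}"
    using assms unfolding vertex_pairs_def by auto
  finally show ?thesis by simp
qed

lemma four_mult_diff_le_square: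
  fixes l n :: nat
  assumes "l \<le> n"
  shows "4 * (l * (n - l)) \<le> n\<^sup>2"
proof -
  obtain r where r: "n = l + r" using assms le_Suc_ex by blast
  have "4 * (int l * int r) \<le> (int l + int r)\<^sup>2"
    using zero_le_power2[of "int l - int r"] by (simp add: power2_eq_square algebra_simps)
  then have "4 * (l * r) \<le> (l + r)\<^sup>2"
    by (metis of_nat_add of_nat_le_iff of_nat_mult of_nat_numeral of_nat_power)
  then show ?thesis using r by simp
qed

lemma feasible_routing_arc0:
  assumes "d * n\<^sup>2 \<le> 4 * c"
  shows "feasible_routing n c d (\<lambda>_ _. d) (\<lambda>_ _. 0)"
  unfolding feasible_routing_def
proof (intro conjI ballI)
  fix l assume "l \<in> cycle_edges n"
  then have l: "1 \<le> l" "l \<le> n" by (auto simp: cycle_edges_def)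
  have "4 * (d * (l * (n - l))) \<le> d * n\<^sup>2"
    using four_mult_diff_le_square[OF l(2)] by (metis mult.left_commute mult_le_mono2)
  with assms have "d * (l * (n - l)) \<le> c" by linarith
  then show "edge_load n (\<lambda>_ _. d) (\<lambda>_ _. 0) l \<le> c"
    using edge_load_arc0_routing[OF l] by simp
qed auto

lemma feasible_routing_split_2:
  assumes "d \<le> 2 * c"
  shows "feasible_routing 2 c d (\<lambda>_ _. d div 2) (\<lambda>_ _. d - d div 2)"
proof -
  have pairs: "vertex_pairs 2 = {(1, 2)}" unfolding vertex_pairs_def by auto
  have "cycle_edges 2 = {1, 2}" by (auto simp: cycle_edges_def)
  then show ?thesis
    using assms
    unfolding feasible_routing_def edge_load_def pairs arc_edges_def cycle_edges_def
    by auto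
qed

lemma ring_size_cases:
  assumes "c \<ge> 1" "d \<ge> 1"
  obtains "ring_size c d = 2" | "d * (ring_size c d)\<^sup>2 \<le> 4 * c"
proof -
  define m where "m = \<lfloor>sqrt (2 / (real d / (2 * real c)))\<rfloor>"
  have "d * (ring_size c d)\<^sup>2 \<le> 4 * c" if "m \<ge> 2"
  proof -
    have n: "ring_size c d = nat m"
      using that unfolding ring_size_def Let_def m_def by simp
    have "real (nat m) \<le> sqrt (2 / (real d / (2 * real c)))"
      using that unfolding m_def by linarith
    then have "(real (nat m))\<^sup>2 \<le> 2 / (real d / (2 * real c))"
      by (metis of_nat_0_le_iff power_mono real_sqrt_ge_0_iff real_sqrt_pow2 order_trans
          zero_le_power2)
    also have "\<dots> = 4 * real c / real d" using assms by (simp add: field_simps)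
    finally have "real d * (real (nat m))\<^sup>2 \<le> 4 * real c"
      using assms by (simp add: field_simps)
    then show ?thesis
      unfolding n by (metis of_nat_le_iff of_nat_mult of_nat_numeral of_nat_power)
  qed
  moreover have "ring_size c d = 2" if "\<not> m \<ge> 2"
    using that unfolding ring_size_def Let_def m_def by simp
  ultimately show ?thesis using that by blast
qed

theorem lemma1:
  fixes c d :: nat
  assumes "c \<ge> 1" and "d \<ge> 1" and "real d / (2 * real c) \<le> 1"
  shows "\<exists>t0 t1 :: nat \<Rightarrow> nat \<Rightarrow> nat.
           (\<forall>(j, k)\<in>vertex_pairs (ring_size c d). t0 j k + t1 j k = d) \<and>
           (\<forall>l\<in>cycle_edges (ring_size c d). edge_load (ring_size c d) t0 t1 l \<le> c)"
proof -
  have "d \<le> 2 * c" using assms by (simp add: divide_simps)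
  then have "\<exists>t0 t1. feasible_routing (ring_size c d) c d t0 t1"
    using ring_size_cases[OF assms(1,2)] feasible_routing_split_2 feasible_routing_arc0
    by metis
  then show ?thesis unfolding feasible_routing_def .
qed

end
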